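(* Let $\mathbb{F}$ be a field, $A\in\mathbb{F}^{n\times n}$, $U,V_0\in\mathbb{F}^n$, $\delta\ge1$, $1\le K<\min\{n,\delta\}$, and $\mathbb{S}\subseteq\mathbb{F}$ a finite subset. Consider the protocol: the Prover commits to vectors $W_0=V_0,W_1,\dots,W_{\lceil\delta/K\rceil}\in\mathbb{F}^n$ (claimed to equal $A^{jK}V_0$) and to values $s[0],\dots,s[\delta]$ (claimed to equal $U^TA^iV_0$); afterwards the Verifier samples $R=(r[0],\dots,r[K-1])\in\mathbb{S}^K$ and $X\in\mathbb{S}^n$ uniformly and independently (unknown to the Prover when committing), computes $Z=X^TA^K$ and $T=\sum_{i=0}^{K-1}r[i]U^TA^i$, and accepts iff for each $j=1,\dots,\lceil\delta/K\rceil$ both $X^TW_j=ZW_{j-1}$ and $\sum_{i=0}^{K-1}r[i]s[jK+i]=TW_j$ hold. Then the Verifier mistakenly misses any error in the sequence or in the checkpointing vectors with probability at most $1/|\mathbb{S}|$.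
   Context: Wiedemann's Krylov sequence associated to $A,U,V_0$ is $s[i]=U^TA^iV_0$.
   Formalization: An error in the sequence means s[i] != $U^TA^iV_0$ for some i with K <= i <= delta only, excluding s[0],...,s[K-1]; the values s[i] with i > delta that the checks read are committed too and unconstrained. Apart from conventions, each condition added here is assumed in the paper as well or is needed for the statement above to hold. *)

theory Defs
  imports "Jordan_Normal_Form.Matrix" "HOL-Probability.Probability_Mass_Function"
begin

definition krylov_seq :: "'a::field mat \<Rightarrow> 'a Matrix.vec \<Rightarrow> 'a Matrix.vec \<Rightarrow> nat \<Rightarrow> 'a" where
  "krylov_seq A U V0 i = U \<bullet> ((A ^\<^sub>m i) *\<^sub>v V0)"

definition num_checkpoints :: "nat \<Rightarrow> nat \<Rightarrow> nat" where
  "num_checkpoints \<delta> K = nat \<lceil>real \<delta> / real K\<rceil>"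

definition vecs_over :: "'a set \<Rightarrow> nat \<Rightarrow> 'a Matrix.vec set" where
  "vecs_over S k = {v \<in> carrier_vec k. \<forall>i<k. v $ i \<in> S}"

text \<open>Z = X^T A^K is represented by the
  column vector (A^K)^T X, and T = sum_{i<K} r[i] U^T A^i by the column vector
  sum_{i<K} r[i] (A^i)^T U.\<close>
definition verifier_accepts ::
  "nat \<Rightarrow> nat \<Rightarrow> nat \<Rightarrow> 'a::field mat \<Rightarrow> 'a Matrix.vec \<Rightarrow> (nat \<Rightarrow> 'a Matrix.vec) \<Rightarrow> (nat \<Rightarrow> 'a)
     \<Rightarrow> 'a Matrix.vec \<Rightarrow> 'a Matrix.vec \<Rightarrow> bool" where
  "verifier_accepts n K \<delta> A U W s R X \<longleftrightarrow>
     (let Z = transpose_mat (A ^\<^sub>m K) *\<^sub>v X;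
          T = Matrix.vec n (\<lambda>k. \<Sum>i<K. R $ i * ((transpose_mat (A ^\<^sub>m i) *\<^sub>v U) $ k))
      in \<forall>j\<in>{1..num_checkpoints \<delta> K}.
           X \<bullet> W j = Z \<bullet> W (j - 1) \<and>
           (\<Sum>i<K. R $ i * s (j * K + i)) = T \<bullet> W j)"

end

theory Submission
  imports Defs
begin

(* Acceptance forces a nonzero linear form to vanish at one of the random vectors.
   If W_j is the first wrong checkpoint, then W_(j-1) is right, so d = W_j - A^K W_(j-1)
   is nonzero, and the first test for j says X^T d = 0.  If all checkpoints are right
   but some s[i] with i = jK + t is wrong, the second test for j says R^T c = 0, where
   c is the (nonzero) error vector of the block s[jK], ..., s[jK+K-1].  A nonzero
   linear form vanishes on at most a 1/|S| fraction of S^k, since any coordinate with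
   a nonzero coefficient is determined by the others. *)

no_notation vec_nth (infixl "$" 90)
no_notation inner (infix "\<bullet>" 70)

lemma pow_mat_add:
  assumes "A \<in> carrier_mat n n"
  shows "A ^\<^sub>m a * A ^\<^sub>m b = A ^\<^sub>m (a + b)"
proof (induction b)
  case 0
  then show ?case using assms by simp
next
  case (Suc b)
  have "A ^\<^sub>m a * (A ^\<^sub>m b * A) = A ^\<^sub>m a * A ^\<^sub>m b * A"
    using assms by (simp add: assoc_mult_mat[of _ n n _ n _ n])
  then show ?case using Suc by simp
qed

lemma pow_mat_mult_vec_add:
  assumes "A \<in> carrier_mat n n" and "v \<in> carrier_vec n"
  shows "A ^\<^sub>m a *\<^sub>v (A ^\<^sub>m b *\<^sub>v v) = A ^\<^sub>m (a + b) *\<^sub>v v"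
  using assms by (metis assoc_mult_mat_vec pow_carrier_mat pow_mat_add)

lemma scalar_prod_transpose_pow_combination:
  fixes A :: "'a::comm_ring_1 mat"
  assumes A: "A \<in> carrier_mat n n" and U: "U \<in> carrier_vec n" and w: "w \<in> carrier_vec n"
  shows "Matrix.vec n (\<lambda>k. \<Sum>i<K. r i * ((transpose_mat (A ^\<^sub>m i) *\<^sub>v U) $ k)) \<bullet> w
       = (\<Sum>i<K. r i * (U \<bullet> (A ^\<^sub>m i *\<^sub>v w)))"
proof -
  let ?t = "\<lambda>i. transpose_mat (A ^\<^sub>m i) *\<^sub>v U"
  have "Matrix.vec n (\<lambda>k. \<Sum>i<K. r i * (?t i $ k)) \<bullet> w
      = (\<Sum>k\<in>{0..<n}. \<Sum>i<K. r i * (?t i $ k * w $ k))"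
    using w by (simp add: scalar_prod_def sum_distrib_right mult.assoc)
  also have "\<dots> = (\<Sum>i<K. r i * (?t i \<bullet> w))"
    using w by (subst sum.swap) (simp add: scalar_prod_def sum_distrib_left)
  also have "\<dots> = (\<Sum>i<K. r i * (U \<bullet> (A ^\<^sub>m i *\<^sub>v w)))"
    using A U w by (simp add: transpose_vec_mult_scalar[of _ n n])
  finally show ?thesis .
qed

lemma minus_vec_eq_zero_iff:
  fixes a b :: "'a::ab_group_add Matrix.vec"
  assumes "a \<in> carrier_vec n" "b \<in> carrier_vec n"
  shows "a - b = 0\<^sub>v n \<longleftrightarrow> a = b"
proof
  assume "a - b = 0\<^sub>v n"
  then have "(a - b) $ i = 0" if "i < n" for i
    using that by simp
  then have "a $ i = b $ i" if "i < n" for i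
    using that assms by (metis carrier_vecD index_minus_vec(1) right_minus_eq)
  then show "a = b"
    using assms by (intro eq_vecI) auto
qed (use assms in simp)

lemma num_checkpoints_mult_ge:
  assumes "0 < K"
  shows "\<delta> \<le> num_checkpoints \<delta> K * K"
proof -
  have "real \<delta> / real K \<le> real (num_checkpoints \<delta> K)"
    unfolding num_checkpoints_def by linarith
  then show ?thesis
    using assms by (simp add: divide_le_eq flip: of_nat_mult)
qed

lemma exists_first_failure:
  assumes "P 0" and "\<not> P j"
  shows "\<exists>i<j. P i \<and> \<not> P (Suc i)"
  using assms by (induction j) (auto intro: less_SucI)

subsection \<open>Zeros of a linear form on a grid\<close>

lemma finite_vecs_over:
  assumes "finite S"
  shows "finite (vecs_over S k)"
proof -
  have "vecs_over S k \<subseteq> Matrix.vec k ` PiE {..<k} (\<lambda>_. S)"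
  proof
    fix v assume v: "v \<in> vecs_over S k"
    then have "v = Matrix.vec k (restrict (($) v) {..<k})"
      by (intro eq_vecI) (auto simp: vecs_over_def)
    moreover have "restrict (($) v) {..<k} \<in> PiE {..<k} (\<lambda>_. S)"
      using v by (auto simp: vecs_over_def)
    ultimately show "v \<in> Matrix.vec k ` PiE {..<k} (\<lambda>_. S)" by blast
  qed
  then show ?thesis
    using assms by (auto intro: finite_subset simp: finite_PiE)
qed

lemma vecs_over_nonempty:
  assumes "S \<noteq> {}"
  shows "vecs_over S k \<noteq> {}"
proof -
  obtain a where "a \<in> S"
    using assms by blast
  then have "Matrix.vec k (\<lambda>_. a) \<in> vecs_over S k"
    by (simp add: vecs_over_def)
  then show ?thesis
    by blast
qed

lemma eq_vec_if_scalar_prod_eq_and_agree_off: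
  fixes c x y :: "'a::field Matrix.vec"
  assumes carrier: "c \<in> carrier_vec k" "x \<in> carrier_vec k" "y \<in> carrier_vec k"
    and l: "l < k" "c $ l \<noteq> 0"
    and eq: "c \<bullet> x = c \<bullet> y" and off: "\<And>i. i < k \<Longrightarrow> i \<noteq> l \<Longrightarrow> x $ i = y $ i"
  shows "x = y"
proof -
  have "0 = c \<bullet> (x - y)"
    using carrier eq by (simp add: scalar_prod_minus_distrib)
  also have "\<dots> = (\<Sum>i\<in>{0..<k}. c $ i * (x $ i - y $ i))"
    using carrier by (simp add: scalar_prod_def)
  also have "\<dots> = (\<Sum>i\<in>{0..<k}. if i = l then c $ l * (x $ l - y $ l) else 0)"
    using off by (intro sum.cong) auto
  also have "\<dots> = c $ l * (x $ l - y $ l)"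
    using l by simp
  finally have "x $ l = y $ l"
    using l by simp
  then show ?thesis
    using carrier off by (metis carrier_vecD eq_vecI)
qed

lemma card_orthogonal_vecs_over:
  fixes c :: "'a::field Matrix.vec"
  assumes S: "finite S" and c: "c \<in> carrier_vec k" "c \<noteq> 0\<^sub>v k"
  shows "card {x \<in> vecs_over S k. c \<bullet> x = 0} * card S \<le> card (vecs_over S k)"
proof -
  obtain l where l: "l < k" "c $ l \<noteq> 0"
    using c by (metis carrier_vecD eq_vecI index_zero_vec)
  define Z where "Z = {x \<in> vecs_over S k. c \<bullet> x = 0}"
  define upd :: "'a Matrix.vec \<times> 'a \<Rightarrow> 'a Matrix.vec"
    where "upd = (\<lambda>(x, t). Matrix.vec k (\<lambda>i. if i = l then t else x $ i))"
  have "inj_on upd (Z \<times> S)"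
  proof (rule inj_onI)
    fix p q assume "p \<in> Z \<times> S" "q \<in> Z \<times> S" and eq: "upd p = upd q"
    then obtain x t y u where pq: "p = (x, t)" "q = (y, u)" and "x \<in> Z" "y \<in> Z"
      by auto
    then have xy: "x \<in> carrier_vec k" "y \<in> carrier_vec k" "c \<bullet> x = c \<bullet> y"
      by (auto simp: Z_def vecs_over_def)
    have coord: "(if i = l then t else x $ i) = (if i = l then u else y $ i)" if "i < k" for i
      using arg_cong[OF eq, of "\<lambda>v. v $ i"] that by (simp add: upd_def pq)
    have "x $ i = y $ i" if "i < k" "i \<noteq> l" for i
      using coord[OF that(1)] that(2) by simp
    then have "x = y"
      using eq_vec_if_scalar_prod_eq_and_agree_off[OF c(1) xy(1,2) l xy(3)] by blast
    then show "p = q"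
      using coord[OF l(1)] pq by simp
  qed
  moreover have "upd ` (Z \<times> S) \<subseteq> vecs_over S k"
    by (auto simp: upd_def Z_def vecs_over_def)
  ultimately have "card (Z \<times> S) \<le> card (vecs_over S k)"
    using card_inj_on_le finite_vecs_over[OF S] by blast
  then show ?thesis
    by (simp add: Z_def card_cartesian_product)
qed

lemma prob_orthogonal_vecs_over:
  fixes c :: "'a::field Matrix.vec"
  assumes S: "finite S" "S \<noteq> {}" and c: "c \<in> carrier_vec k" "c \<noteq> 0\<^sub>v k"
  shows "measure_pmf.prob (pmf_of_set (vecs_over S k)) {x. c \<bullet> x = 0} \<le> 1 / real (card S)"
proof -
  let ?V = "vecs_over S k"
  have V: "finite ?V" "?V \<noteq> {}"
    using finite_vecs_over[OF S(1)] vecs_over_nonempty[OF S(2)] .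
  have "?V \<inter> {x. c \<bullet> x = 0} = {x \<in> ?V. c \<bullet> x = 0}"
    by blast
  then have bound: "real (card (?V \<inter> {x. c \<bullet> x = 0})) * real (card S) \<le> real (card ?V)"
    using card_orthogonal_vecs_over[OF S(1) c] by (metis of_nat_le_iff of_nat_mult)
  have "measure_pmf.prob (pmf_of_set ?V) {x. c \<bullet> x = 0}
      = real (card (?V \<inter> {x. c \<bullet> x = 0})) / real (card ?V)"
    by (rule measure_pmf_of_set[OF V(2,1)])
  also have "\<dots> \<le> 1 / real (card S)"
    using bound V S by (simp add: divide_simps card_gt_0_iff)
  finally show ?thesis .
qed

subsection \<open>Uniform distributions on products\<close>

lemma pmf_of_set_Times:
  assumes "finite A" "A \<noteq> {}" "finite B" "B \<noteq> {}"
  shows "pmf_of_set (A \<times> B) = pair_pmf (pmf_of_set A) (pmf_of_set B)"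
  by (rule pmf_eqI)
    (simp add: assms split_paired_all pmf_pair card_cartesian_product split: split_indicator)

lemma prob_pmf_of_set_Times_le_fst:
  assumes "finite A" "A \<noteq> {}" "finite B" "B \<noteq> {}"
    and "\<And>a b. a \<in> A \<Longrightarrow> b \<in> B \<Longrightarrow> (a, b) \<in> E \<Longrightarrow> a \<in> Z"
  shows "measure_pmf.prob (pmf_of_set (A \<times> B)) E \<le> measure_pmf.prob (pmf_of_set A) Z"
proof -
  have "measure_pmf.prob (pmf_of_set (A \<times> B)) E
      \<le> measure_pmf.prob (pmf_of_set (A \<times> B)) (fst -` Z)"
    using assms by (intro measure_pmf.finite_measure_mono_AE) (auto simp: AE_measure_pmf_iff)
  also have "\<dots> = measure_pmf.prob (pmf_of_set A) Z"
    using assms(1-4) by (simp flip: measure_map_pmf add: pmf_of_set_Times map_fst_pair_pmf)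
  finally show ?thesis .
qed

lemma prob_pmf_of_set_Times_le_snd:
  assumes "finite A" "A \<noteq> {}" "finite B" "B \<noteq> {}"
    and "\<And>a b. a \<in> A \<Longrightarrow> b \<in> B \<Longrightarrow> (a, b) \<in> E \<Longrightarrow> b \<in> Z"
  shows "measure_pmf.prob (pmf_of_set (A \<times> B)) E \<le> measure_pmf.prob (pmf_of_set B) Z"
proof -
  have "measure_pmf.prob (pmf_of_set (A \<times> B)) E
      \<le> measure_pmf.prob (pmf_of_set (A \<times> B)) (snd -` Z)"
    using assms by (intro measure_pmf.finite_measure_mono_AE) (auto simp: AE_measure_pmf_iff)
  also have "\<dots> = measure_pmf.prob (pmf_of_set B) Z"
    using assms(1-4) by (simp flip: measure_map_pmf add: pmf_of_set_Times map_snd_pair_pmf)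
  finally show ?thesis .
qed

lemma verifier_accepts_checkpoint_test:
  fixes A :: "'a::field mat"
  assumes acc: "verifier_accepts n K \<delta> A U W s R X" and j: "j \<in> {1..num_checkpoints \<delta> K}"
    and A: "A \<in> carrier_mat n n" and X: "X \<in> carrier_vec n"
    and W: "W (j - 1) \<in> carrier_vec n" "W j \<in> carrier_vec n"
  shows "(W j - A ^\<^sub>m K *\<^sub>v W (j - 1)) \<bullet> X = 0"
proof -
  have AKW: "A ^\<^sub>m K *\<^sub>v W (j - 1) \<in> carrier_vec n"
    using A W by (metis mult_mat_vec_carrier pow_carrier_mat)
  have test: "X \<bullet> W j = (transpose_mat (A ^\<^sub>m K) *\<^sub>v X) \<bullet> W (j - 1)"
    using acc j by (simp add: verifier_accepts_def Let_def)
  have "(W j - A ^\<^sub>m K *\<^sub>v W (j - 1)) \<bullet> X = X \<bullet> (W j - A ^\<^sub>m K *\<^sub>v W (j - 1))"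
    using X W AKW by (intro comm_scalar_prod[of _ n]) auto
  also have "\<dots> = X \<bullet> W j - X \<bullet> (A ^\<^sub>m K *\<^sub>v W (j - 1))"
    by (rule scalar_prod_minus_distrib[OF X W(2) AKW])
  also have "\<dots> = 0"
    using test A X W by (simp add: transpose_vec_mult_scalar[of _ n n])
  finally show ?thesis .
qed

lemma verifier_accepts_block_test:
  fixes A :: "'a::field mat"
  assumes acc: "verifier_accepts n K \<delta> A U W s R X" and j: "j \<in> {1..num_checkpoints \<delta> K}"
    and A: "A \<in> carrier_mat n n" and U: "U \<in> carrier_vec n" and W: "W j \<in> carrier_vec n"
    and R: "R \<in> carrier_vec K"
  shows "Matrix.vec K (\<lambda>t. s (j * K + t) - U \<bullet> (A ^\<^sub>m t *\<^sub>v W j)) \<bullet> R = 0"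
proof -
  have "(\<Sum>t<K. R $ t * s (j * K + t)) = (\<Sum>t<K. R $ t * (U \<bullet> (A ^\<^sub>m t *\<^sub>v W j)))"
    using acc j scalar_prod_transpose_pow_combination[OF A U W, where K = K and r = "\<lambda>t. R $ t"]
    by (simp add: verifier_accepts_def Let_def)
  then show ?thesis
    using R by (simp add: scalar_prod_def atLeast0LessThan algebra_simps sum_subtractf)
qed

lemma prob_verifier_accepts_wrong_checkpoint:
  fixes A :: "'a::field mat"
  assumes A: "A \<in> carrier_mat n n" and V0: "V0 \<in> carrier_vec n"
    and S: "finite S" "S \<noteq> {}"
    and W0: "W 0 = V0" and W: "\<forall>j\<le>num_checkpoints \<delta> K. W j \<in> carrier_vec n"
    and wrong: "j \<in> {1..num_checkpoints \<delta> K}" "W j \<noteq> A ^\<^sub>m (j * K) *\<^sub>v V0"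
  shows "measure_pmf.prob (pmf_of_set (vecs_over S K \<times> vecs_over S n))
           {(R, X). verifier_accepts n K \<delta> A U W s R X} \<le> 1 / real (card S)"
proof -
  obtain i where i: "i < j" "W i = A ^\<^sub>m (i * K) *\<^sub>v V0"
      "W (Suc i) \<noteq> A ^\<^sub>m (Suc i * K) *\<^sub>v V0"
    using exists_first_failure[of "\<lambda>i. W i = A ^\<^sub>m (i * K) *\<^sub>v V0" j] W0 A V0 wrong(2)
    by auto
  have Wi: "W i \<in> carrier_vec n" "W (Suc i) \<in> carrier_vec n"
    using W i(1) wrong(1) by auto
  have AKW: "A ^\<^sub>m K *\<^sub>v W i \<in> carrier_vec n"
    using A Wi by (metis mult_mat_vec_carrier pow_carrier_mat)
  define d where "d = W (Suc i) - A ^\<^sub>m K *\<^sub>v W i"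
  have "A ^\<^sub>m K *\<^sub>v W i = A ^\<^sub>m (Suc i * K) *\<^sub>v V0"
    using pow_mat_mult_vec_add[OF A V0, of K "i * K"] i(2) by simp
  then have d: "d \<in> carrier_vec n" "d \<noteq> 0\<^sub>v n"
    using i(3) Wi AKW by (auto simp: d_def minus_vec_eq_zero_iff)
  have "measure_pmf.prob (pmf_of_set (vecs_over S K \<times> vecs_over S n))
          {(R, X). verifier_accepts n K \<delta> A U W s R X}
        \<le> measure_pmf.prob (pmf_of_set (vecs_over S n)) {X. d \<bullet> X = 0}"
  proof (rule prob_pmf_of_set_Times_le_snd)
    fix R X assume "X \<in> vecs_over S n" "(R, X) \<in> {(R, X). verifier_accepts n K \<delta> A U W s R X}"
    then show "X \<in> {X. d \<bullet> X = 0}"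
      using verifier_accepts_checkpoint_test[of n K \<delta> A U W s R X "Suc i"] i(1) wrong(1) A Wi
      by (simp add: d_def vecs_over_def)
  qed (use finite_vecs_over[OF S(1)] vecs_over_nonempty[OF S(2)] in auto)
  also have "\<dots> \<le> 1 / real (card S)"
    by (rule prob_orthogonal_vecs_over[OF S d])
  finally show ?thesis .
qed

lemma prob_verifier_accepts_wrong_value:
  fixes A :: "'a::field mat"
  assumes A: "A \<in> carrier_mat n n" and U: "U \<in> carrier_vec n" and V0: "V0 \<in> carrier_vec n"
    and K: "0 < K" and S: "finite S" "S \<noteq> {}"
    and W: "\<forall>j\<in>{1..num_checkpoints \<delta> K}. W j = A ^\<^sub>m (j * K) *\<^sub>v V0"
    and wrong: "i \<in> {K..\<delta>}" "s i \<noteq> krylov_seq A U V0 i"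
  shows "measure_pmf.prob (pmf_of_set (vecs_over S K \<times> vecs_over S n))
           {(R, X). verifier_accepts n K \<delta> A U W s R X} \<le> 1 / real (card S)"
proof -
  define j where "j = i div K"
  have "j * K \<le> num_checkpoints \<delta> K * K"
    using div_times_less_eq_dividend[of i K] wrong(1)[unfolded atLeastAtMost_iff]
      num_checkpoints_mult_ge[OF K, of \<delta>]
    unfolding j_def by linarith
  moreover have "0 < j"
    using wrong(1) K by (simp add: j_def div_greater_zero_iff)
  ultimately have j: "j \<in> {1..num_checkpoints \<delta> K}"
    using K by simp
  have Wj: "W j \<in> carrier_vec n"
    using W j A V0 by (metis mult_mat_vec_carrier pow_carrier_mat)
  define c where "c = Matrix.vec K (\<lambda>t. s (j * K + t) - U \<bullet> (A ^\<^sub>m t *\<^sub>v W j))"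
  have "c $ (i mod K) = s i - krylov_seq A U V0 i"
    using W j K pow_mat_mult_vec_add[OF A V0, of "i mod K" "j * K"]
    by (simp add: c_def krylov_seq_def j_def add.commute)
  then have "c \<noteq> 0\<^sub>v K"
    using wrong(2) K by (metis index_zero_vec(1) mod_less_divisor right_minus_eq)
  then have c: "c \<in> carrier_vec K" "c \<noteq> 0\<^sub>v K"
    by (simp_all add: c_def)
  have "measure_pmf.prob (pmf_of_set (vecs_over S K \<times> vecs_over S n))
          {(R, X). verifier_accepts n K \<delta> A U W s R X}
        \<le> measure_pmf.prob (pmf_of_set (vecs_over S K)) {R. c \<bullet> R = 0}"
  proof (rule prob_pmf_of_set_Times_le_fst)
    fix R X assume "R \<in> vecs_over S K" "(R, X) \<in> {(R, X). verifier_accepts n K \<delta> A U W s R X}"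
    then show "R \<in> {R. c \<bullet> R = 0}"
      using verifier_accepts_block_test[of n K \<delta> A U W s R X j] j A U Wj
      by (simp add: c_def vecs_over_def)
  qed (use finite_vecs_over[OF S(1)] vecs_over_nonempty[OF S(2)] in auto)
  also have "\<dots> \<le> 1 / real (card S)"
    by (rule prob_orthogonal_vecs_over[OF S c])
  finally show ?thesis .
qed

theorem mainTheorem3:
  fixes A :: "'a::field mat" and U V0 :: "'a Matrix.vec" and n \<delta> K :: nat
    and S :: "'a set" and W :: "nat \<Rightarrow> 'a Matrix.vec" and s :: "nat \<Rightarrow> 'a"
  assumes "A \<in> carrier_mat n n" and "U \<in> carrier_vec n" and "V0 \<in> carrier_vec n"
    and "\<delta> \<ge> 1" and "1 \<le> K" and "K < min n \<delta>"
    and "finite S" and "S \<noteq> {}"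
    and "W 0 = V0" and "\<forall>j\<le>num_checkpoints \<delta> K. W j \<in> carrier_vec n"
    and "(\<exists>j\<in>{1..num_checkpoints \<delta> K}. W j \<noteq> (A ^\<^sub>m (j * K)) *\<^sub>v V0)
         \<or> (\<exists>i\<in>{K..\<delta>}. s i \<noteq> krylov_seq A U V0 i)"
  shows "measure_pmf.prob (pmf_of_set (vecs_over S K \<times> vecs_over S n))
           {(R, X). verifier_accepts n K \<delta> A U W s R X} \<le> 1 / real (card S)"
proof (cases "\<exists>j\<in>{1..num_checkpoints \<delta> K}. W j \<noteq> A ^\<^sub>m (j * K) *\<^sub>v V0")
  case True
  then obtain j where "j \<in> {1..num_checkpoints \<delta> K}" "W j \<noteq> A ^\<^sub>m (j * K) *\<^sub>v V0"
    by blast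
  then show ?thesis
    using prob_verifier_accepts_wrong_checkpoint assms(1,3,7-10) by blast
next
  case False
  then obtain i where "i \<in> {K..\<delta>}" "s i \<noteq> krylov_seq A U V0 i"
    using assms(11) by blast
  moreover have "0 < K"
    using assms(5) by simp
  ultimately show ?thesis
    using False prob_verifier_accepts_wrong_value assms(1-3,7,8) by blast
qed

end
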